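(* Fix $\gamma \geq 1$ and $0 \leq \rho < 1$. Let $A(u,v) = (u,u+v)$, $\mathbf{1} = (1,1)$, $\mathbf{c} = (\gamma,1)$, and let $T,M:\mathbb{R}^2\to\mathbb{R}^2$ be defined by $$T\mathbf{x} = \begin{cases} A\mathbf{x} + \mathbf{1}, & \langle \mathbf{c},\mathbf{x}\rangle \leq -1/2,\\ A\mathbf{x}, & |\langle \mathbf{c},\mathbf{x}\rangle| < 1/2,\\ A\mathbf{x} - \mathbf{1}, & \langle \mathbf{c},\mathbf{x}\rangle \geq 1/2,\end{cases}\qquad M(u,v) = \begin{cases} T(\rho u,\rho v), & u \geq 0,\\ T(u,v), & u<0.\end{cases}$$ Let $S^+ = \{(u,v) : -1/2 \leq \gamma u + v \leq 1/2 + \gamma,\ 0 \leq u < 1\}$, $S^- = \{(u,v) : -(1/2+\gamma) \leq \gamma u + v \leq 1/2,\ -1 \leq u < 0\}$, and $S = S^+\cup S^-$. If $\mathbf{x}_0 \in S$, then the iterates $\mathbf{x}_n = M^n\mathbf{x}_0$ eventually remain in $S^+$ (there exists $N$ with $\mathbf{x}_n \in S^+$ for all $n \geq N$), and $\|\mathbf{x}_n\| \to 0$ as $n \to \infty$.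
   Context: $\langle\cdot,\cdot\rangle$ is the standard inner product on $\mathbb{R}^2$. *)

theory Defs
  imports "HOL-Analysis.Analysis"
begin

definition A_map :: "real \<times> real \<Rightarrow> real \<times> real" where
  "A_map x = (fst x, fst x + snd x)"

definition T_map :: "real \<Rightarrow> real \<times> real \<Rightarrow> real \<times> real" where
  "T_map \<gamma> x =
    (let s = (\<gamma>, 1) \<bullet> x; y = A_map x in
     if s \<le> -1/2 then y + (1, 1)
     else if \<bar>s\<bar> < 1/2 then y
     else y - (1, 1))"

definition M_map :: "real \<Rightarrow> real \<Rightarrow> real \<times> real \<Rightarrow> real \<times> real" where
  "M_map \<gamma> \<rho> x =
    (if fst x \<ge> 0 then T_map \<gamma> (\<rho> *\<^sub>R x) else T_map \<gamma> x)"

definition S_plus :: "real \<Rightarrow> (real \<times> real) set" where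
  "S_plus \<gamma> = {(u, v). -1/2 \<le> \<gamma> * u + v \<and> \<gamma> * u + v \<le> 1/2 + \<gamma> \<and> 0 \<le> u \<and> u < 1}"

definition S_minus :: "real \<Rightarrow> (real \<times> real) set" where
  "S_minus \<gamma> = {(u, v). -(1/2 + \<gamma>) \<le> \<gamma> * u + v \<and> \<gamma> * u + v \<le> 1/2 \<and> -1 \<le> u \<and> u < 0}"

definition S_set :: "real \<Rightarrow> (real \<times> real) set" where
  "S_set \<gamma> = S_plus \<gamma> \<union> S_minus \<gamma>"

end

theory Submission
  imports Defs
begin

text \<open>
  Write \<open>s = \<gamma> u + v\<close> for the level of \<open>(u, v)\<close>. A point of \<open>S\<close> outside the trap
  \<open>S\<^sup>+ \<union> S\<^sup>-\<close> (with the edge \<open>s = 1/2\<close> of \<open>S\<^sup>-\<close> removed) lies on that edge, and an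
  explicit computation shows that its orbit enters the trap within five steps. The trap is
  forward invariant and \<open>frac u\<close> never increases on it. Outside the core
  \<open>0 \<le> u \<le> (1 - \<rho>)/2, |s| \<le> 1/2\<close> a potential, combining \<open>frac u\<close> with the level, drops by a
  fixed amount at every step, so the orbit reaches the core. The core lies in \<open>S\<^sup>+\<close>, is
  invariant, and on it \<open>M\<close> is \<open>x \<mapsto> \<rho> A x\<close>, which contracts the gauge
  \<open>|s| + 2u/(1 - \<rho>)\<close> by the factor \<open>(1 + \<rho>)/2\<close>; the gauge dominates the norm.
\<close>

lemma funpow_invariant:
  assumes "x \<in> I" and "\<And>y. y \<in> I \<Longrightarrow> f y \<in> I"
  shows "(f ^^ n) x \<in> I"
  using assms by (induction n) auto

lemma orbit_enters_by_potential:
  fixes f :: "'a \<Rightarrow> 'a" and Z :: "'a \<Rightarrow> real"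
  assumes x: "x \<in> I" and inv: "\<And>y. y \<in> I \<Longrightarrow> f y \<in> I"
    and bounded: "\<And>y. y \<in> I \<Longrightarrow> L \<le> Z y"
    and d: "d > 0" and decrease: "\<And>y. y \<in> I \<Longrightarrow> y \<notin> G \<Longrightarrow> Z (f y) \<le> Z y - d"
  shows "\<exists>k. (f ^^ k) x \<in> G"
proof (rule ccontr)
  assume outside: "\<nexists>k. (f ^^ k) x \<in> G"
  have orbit: "(f ^^ k) x \<in> I" for k
    using x inv by (rule funpow_invariant)
  have descent: "Z ((f ^^ k) x) \<le> Z x - real k * d" for k
  proof (induction k)
    case (Suc k)
    have "Z ((f ^^ Suc k) x) \<le> Z ((f ^^ k) x) - d"
      using decrease[OF orbit] outside by simp
    with Suc show ?case by (simp add: algebra_simps)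
  qed simp
  obtain k where "Z x - L < real k * d"
    using reals_Archimedean3[OF d] by blast
  then show False
    using descent[of k] bounded[OF orbit, of k] by linarith
qed

lemma orbit_tendsto_zero_by_gauge:
  fixes f :: "'a::real_normed_vector \<Rightarrow> 'a" and \<phi> :: "'a \<Rightarrow> real"
  assumes x: "x \<in> G" and inv: "\<And>y. y \<in> G \<Longrightarrow> f y \<in> G"
    and contract: "\<And>y. y \<in> G \<Longrightarrow> \<phi> (f y) \<le> q * \<phi> y" and q: "0 \<le> q" "q < 1"
    and norm_le: "\<And>y. y \<in> G \<Longrightarrow> norm y \<le> C * \<phi> y" and C: "0 \<le> C"
  shows "(\<lambda>n. norm ((f ^^ n) x)) \<longlonglongrightarrow> 0"
proof (rule Lim_null_comparison)
  have orbit: "(f ^^ n) x \<in> G" for n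
    using x inv by (rule funpow_invariant)
  have gauge: "\<phi> ((f ^^ n) x) \<le> q ^ n * \<phi> x" for n
  proof (induction n)
    case (Suc n)
    have "\<phi> ((f ^^ Suc n) x) \<le> q * \<phi> ((f ^^ n) x)"
      using contract[OF orbit] by simp
    also have "\<dots> \<le> q * (q ^ n * \<phi> x)"
      using Suc q by (intro mult_left_mono) auto
    finally show ?case by simp
  qed simp
  have "norm (norm ((f ^^ n) x)) \<le> C * \<phi> x * q ^ n" for n
  proof -
    have "norm ((f ^^ n) x) \<le> C * \<phi> ((f ^^ n) x)"
      using norm_le[OF orbit] .
    also have "\<dots> \<le> C * (q ^ n * \<phi> x)"
      using gauge C by (intro mult_left_mono) auto
    finally show ?thesis by (simp add: algebra_simps)
  qed
  then show "\<forall>\<^sub>F n in sequentially. norm (norm ((f ^^ n) x)) \<le> C * \<phi> x * q ^ n"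
    by simp
  show "(\<lambda>n. C * \<phi> x * q ^ n) \<longlonglongrightarrow> 0"
    using q by (intro tendsto_mult_right_zero LIMSEQ_realpow_zero)
qed

lemma T_map_low: "\<gamma> * u + v \<le> -1/2 \<Longrightarrow> T_map \<gamma> (u, v) = (u + 1, u + v + 1)"
  by (simp add: T_map_def A_map_def)

lemma T_map_mid: "\<bar>\<gamma> * u + v\<bar> < 1/2 \<Longrightarrow> T_map \<gamma> (u, v) = (u, u + v)"
  by (auto simp: T_map_def A_map_def Let_def)

lemma T_map_high: "\<gamma> * u + v \<ge> 1/2 \<Longrightarrow> T_map \<gamma> (u, v) = (u - 1, u + v - 1)"
  by (simp add: T_map_def A_map_def)

lemma M_map_neg: "u < 0 \<Longrightarrow> M_map \<gamma> \<rho> (u, v) = T_map \<gamma> (u, v)"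
  by (simp add: M_map_def)

lemma M_map_nonneg: "0 \<le> u \<Longrightarrow> M_map \<gamma> \<rho> (u, v) = T_map \<gamma> (\<rho> * u, \<rho> * v)"
  by (simp add: M_map_def)

lemma level_scale: "\<gamma> * (\<rho> * u) + \<rho> * v = \<rho> * (\<gamma> * u + v :: real)"
  by (simp add: algebra_simps)

text \<open>The edge \<open>\<gamma> u + v = 1/2\<close> of \<open>S\<^sup>-\<close> is excluded: \<open>T\<close> maps it out of \<open>S\<close>.\<close>

definition S_minus_open :: "real \<Rightarrow> (real \<times> real) set" where
  "S_minus_open \<gamma> = {(u, v). -(1/2 + \<gamma>) \<le> \<gamma> * u + v \<and> \<gamma> * u + v < 1/2 \<and> -1 \<le> u \<and> u < 0}"

definition trap :: "real \<Rightarrow> (real \<times> real) set" where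
  "trap \<gamma> = S_plus \<gamma> \<union> S_minus_open \<gamma>"

lemma S_set_minus_trap:
  "(u, v) \<in> S_set \<gamma> \<Longrightarrow> (u, v) \<notin> trap \<gamma> \<Longrightarrow> \<gamma> * u + v = 1/2 \<and> -1 \<le> u \<and> u < 0"
  by (auto simp: S_set_def trap_def S_minus_def S_minus_open_def)

lemma frac_fst_trap:
  assumes "(u, v) \<in> trap \<gamma>"
  shows "frac u = (if 0 \<le> u then u else u + 1)"
proof (cases "0 \<le> u")
  case False
  then have "frac (u + 1) = u + 1"
    using assms by (intro frac_eq_id) (auto simp: trap_def S_plus_def S_minus_open_def)
  then show ?thesis
    using False by (simp add: frac_1_eq)
qed (use assms in \<open>auto simp: trap_def S_plus_def S_minus_open_def\<close>)

text \<open>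
  For \<open>u < 0\<close> this is the level of \<open>A x + (1, 1)\<close>: the jump of a point of \<open>S_minus_open\<close>
  back to \<open>u \<ge> 0\<close> leaves it unchanged, and every step that stays in \<open>S_minus_open\<close>
  lowers it by \<open>|u|\<close>.
\<close>

definition lifted_level :: "real \<Rightarrow> real \<times> real \<Rightarrow> real" where
  "lifted_level \<gamma> x =
    (if 0 \<le> fst x then \<gamma> * fst x + snd x else \<gamma> * fst x + snd x + fst x + \<gamma> + 1)"

text \<open>
  The weight \<open>6/(1 - \<rho>)\<^sup>2\<close> makes the contraction of \<open>u\<close> dominate as long as
  \<open>u > (1 - \<rho>)/2\<close>; the bonus \<open>(1 - \<rho>)\<^sup>2/4\<close> on \<open>u < 0\<close> pays for the jump back to \<open>u \<ge> 0\<close>.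
\<close>

definition potential :: "real \<Rightarrow> real \<Rightarrow> real \<times> real \<Rightarrow> real" where
  "potential \<gamma> \<rho> x =
    6 / (1 - \<rho>)^2 * frac (fst x) + lifted_level \<gamma> x + (if fst x < 0 then (1 - \<rho>)^2 / 4 else 0)"

definition core :: "real \<Rightarrow> real \<Rightarrow> (real \<times> real) set" where
  "core \<gamma> \<rho> = {(u, v). 0 \<le> u \<and> u \<le> (1 - \<rho>) / 2 \<and> -1/2 \<le> \<gamma> * u + v \<and> \<gamma> * u + v \<le> 1/2}"

definition gauge :: "real \<Rightarrow> real \<Rightarrow> real \<times> real \<Rightarrow> real" where
  "gauge \<gamma> \<rho> x = \<bar>\<gamma> * fst x + snd x\<bar> + 2 / (1 - \<rho>) * fst x"

context
  fixes \<gamma> \<rho> :: real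
  assumes \<gamma>: "1 \<le> \<gamma>" and \<rho>: "0 \<le> \<rho>" "\<rho> < 1"
begin

lemma S_plus_step:
  assumes x: "(u, v) \<in> S_plus \<gamma>"
  defines "y \<equiv> M_map \<gamma> \<rho> (u, v)"
  shows "y \<in> trap \<gamma> \<and> frac (fst y) = \<rho> * u \<and> lifted_level \<gamma> y \<le> \<rho> * (\<gamma> * u + v) + \<rho> * u"
proof -
  define s where "s = \<gamma> * u + v"
  from x have u: "0 \<le> u" "u < 1" and s: "-1/2 \<le> s" "s \<le> 1/2 + \<gamma>"
    unfolding S_plus_def s_def by auto
  have "\<rho> * u \<le> u"
    using \<rho> u by (simp add: mult_left_le_one_le)
  then have \<rho>u: "0 \<le> \<rho> * u" "\<rho> * u < 1"
    using \<rho> u by simp_all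
  have "\<rho> * s \<ge> \<rho> * (-1/2)"
    using \<rho> s by (intro mult_left_mono) auto
  then have \<rho>s_gt: "\<rho> * s > -1/2"
    using \<rho> by linarith
  have "\<rho> * s \<le> \<rho> * (1/2 + \<gamma>)"
    using \<rho> s by (intro mult_left_mono) auto
  moreover have "\<rho> * (1/2 + \<gamma>) < 1/2 + \<gamma>"
    using \<rho> \<gamma> mult_strict_right_mono[of \<rho> 1 "1/2 + \<gamma>"] by simp
  ultimately have \<rho>s_lt: "\<rho> * s < 1/2 + \<gamma>"
    by linarith
  have level: "\<gamma> * (\<rho> * u) + \<rho> * v = \<rho> * s"
    unfolding s_def by (rule level_scale)
  show ?thesis
  proof (cases "\<rho> * s < 1/2")
    case True
    then have "y = (\<rho> * u, \<rho> * u + \<rho> * v)"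
      using u level \<rho>s_gt by (simp add: y_def M_map_nonneg T_map_mid)
    moreover have "(\<rho> * u, \<rho> * u + \<rho> * v) \<in> S_plus \<gamma>"
      unfolding S_plus_def mem_Collect_eq case_prod_conv
      using \<rho>u \<rho>s_gt True \<gamma> level by linarith
    moreover have "lifted_level \<gamma> (\<rho> * u, \<rho> * u + \<rho> * v) = \<rho> * s + \<rho> * u"
      using \<rho>u level by (simp add: lifted_level_def)
    ultimately show ?thesis
      using \<rho>u by (simp add: trap_def s_def)
  next
    case False
    then have "y = (\<rho> * u - 1, \<rho> * u + \<rho> * v - 1)"
      using u level by (simp add: y_def M_map_nonneg T_map_high)
    moreover have level': "\<gamma> * (\<rho> * u - 1) + (\<rho> * u + \<rho> * v - 1) = \<rho> * s + \<rho> * u - \<gamma> - 1"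
      using level by (simp add: algebra_simps)
    moreover have "(\<rho> * u - 1, \<rho> * u + \<rho> * v - 1) \<in> S_minus_open \<gamma>"
      unfolding S_minus_open_def mem_Collect_eq case_prod_conv level'
      using \<rho>u \<rho>s_lt False \<gamma> by linarith
    moreover have "frac (\<rho> * u - 1) = \<rho> * u"
      using \<rho>u frac_1_eq[of "\<rho> * u - 1"] by simp
    moreover have "lifted_level \<gamma> (\<rho> * u - 1, \<rho> * u + \<rho> * v - 1) = \<rho> * s + 2 * (\<rho> * u) - 1"
      using \<rho>u level' by (simp add: lifted_level_def)
    ultimately show ?thesis
      using \<rho>u by (simp add: trap_def s_def)
  qed
qed

lemma S_minus_open_step:
  assumes x: "(u, v) \<in> S_minus_open \<gamma>"
  defines "y \<equiv> M_map \<gamma> \<rho> (u, v)"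
  shows "y \<in> trap \<gamma> \<and> frac (fst y) = frac u \<and>
    lifted_level \<gamma> y = lifted_level \<gamma> (u, v) + (if fst y < 0 then u else 0)"
proof -
  from x have u: "-1 \<le> u" "u < 0" and s: "-(1/2 + \<gamma>) \<le> \<gamma> * u + v" "\<gamma> * u + v < 1/2"
    unfolding S_minus_open_def by auto
  show ?thesis
  proof (cases "\<gamma> * u + v \<le> -1/2")
    case True
    then have "y = (u + 1, u + v + 1)"
      using u by (simp add: y_def M_map_neg T_map_low)
    moreover have level: "\<gamma> * (u + 1) + (u + v + 1) = (\<gamma> * u + v) + u + \<gamma> + 1"
      by (simp add: algebra_simps)
    moreover have "(u + 1, u + v + 1) \<in> S_plus \<gamma>"
      unfolding S_plus_def mem_Collect_eq case_prod_conv level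
      using u s True by linarith
    ultimately show ?thesis
      using u by (simp add: trap_def lifted_level_def frac_1_eq)
  next
    case False
    then have "\<bar>\<gamma> * u + v\<bar> < 1/2"
      using s by linarith
    then have "y = (u, u + v)"
      using u by (simp add: y_def M_map_neg T_map_mid)
    moreover have "(u, u + v) \<in> S_minus_open \<gamma>"
      unfolding S_minus_open_def mem_Collect_eq case_prod_conv
      using u s False \<gamma> by linarith
    ultimately show ?thesis
      using u by (simp add: trap_def lifted_level_def)
  qed
qed

lemma trap_step:
  assumes "x \<in> trap \<gamma>"
  shows "M_map \<gamma> \<rho> x \<in> trap \<gamma> \<and> frac (fst (M_map \<gamma> \<rho> x)) \<le> frac (fst x)"
proof -
  obtain u v where x: "x = (u, v)"
    by fastforce
  show ?thesis
  proof (cases "0 \<le> u")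
    case True
    then have "(u, v) \<in> S_plus \<gamma>"
      using assms by (auto simp: x trap_def S_minus_open_def)
    moreover have "\<rho> * u \<le> frac u"
      using frac_fst_trap[of u v \<gamma>] assms True \<rho> by (simp add: x mult_left_le_one_le)
    ultimately show ?thesis
      using S_plus_step by (simp add: x)
  next
    case False
    then have "(u, v) \<in> S_minus_open \<gamma>"
      using assms by (auto simp: x trap_def S_plus_def)
    then show ?thesis
      using S_minus_open_step by (simp add: x)
  qed
qed

lemma potential_lower_bound:
  assumes "x \<in> trap \<gamma>"
  shows "-1/2 \<le> potential \<gamma> \<rho> x"
proof -
  have "-1/2 \<le> lifted_level \<gamma> x"
    using assms by (auto simp: trap_def S_plus_def S_minus_open_def lifted_level_def)
  moreover have "0 \<le> 6 / (1 - \<rho>)^2 * frac (fst x)"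
    by simp
  moreover have "0 \<le> (if fst x < 0 then (1 - \<rho>)^2 / 4 else 0)"
    by simp
  ultimately show ?thesis
    unfolding potential_def by linarith
qed

lemma potential_S_plus_step:
  assumes x: "(u, v) \<in> S_plus \<gamma>"
  shows "potential \<gamma> \<rho> (M_map \<gamma> \<rho> (u, v))
    \<le> potential \<gamma> \<rho> (u, v) - (6 / (1 - \<rho>) * u + (1 - \<rho>) * (\<gamma> * u + v) - \<rho> * u - (1 - \<rho>)^2 / 4)"
proof -
  define y where "y = M_map \<gamma> \<rho> (u, v)"
  define C where "C = 6 / (1 - \<rho>)^2"
  define s where "s = \<gamma> * u + v"
  have u: "0 \<le> u" "u < 1"
    using x by (simp_all add: S_plus_def)
  have step: "frac (fst y) = \<rho> * u" "lifted_level \<gamma> y \<le> \<rho> * s + \<rho> * u"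
    using S_plus_step[OF x] by (simp_all add: y_def s_def)
  have "potential \<gamma> \<rho> (u, v) = C * u + s"
    using u by (simp add: potential_def lifted_level_def C_def s_def)
  moreover have "potential \<gamma> \<rho> y \<le> C * frac (fst y) + lifted_level \<gamma> y + (1 - \<rho>)^2 / 4"
    by (simp add: potential_def C_def)
  moreover have "C * u - C * (\<rho> * u) = 6 / (1 - \<rho>) * u"
  proof -
    have "C * u - C * (\<rho> * u) = C * (1 - \<rho>) * u"
      by (simp add: algebra_simps)
    also have "\<dots> = 6 / (1 - \<rho>)^2 * (1 - \<rho>) * u"
      by (simp add: C_def)
    also have "\<dots> = 6 / (1 - \<rho>) * u"
      using \<rho> by (simp add: power2_eq_square divide_simps)
    finally show ?thesis .
  qed
  moreover have "s - \<rho> * s = (1 - \<rho>) * s"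
    by (simp add: algebra_simps)
  ultimately show ?thesis
    using step by (simp add: y_def s_def)
qed

lemma potential_decrease_S_plus:
  assumes x: "(u, v) \<in> S_plus \<gamma>" "(u, v) \<notin> core \<gamma> \<rho>"
  shows "potential \<gamma> \<rho> (M_map \<gamma> \<rho> (u, v)) \<le> potential \<gamma> \<rho> (u, v) - (1 - \<rho>)^2 / 4"
proof -
  define s where "s = \<gamma> * u + v"
  define e where "e = (1 - \<rho>)^2 / 4"
  have u: "0 \<le> u" "u < 1" and s: "-1/2 \<le> s" and escape: "u > (1 - \<rho>) / 2 \<or> s > 1/2"
    using x by (auto simp: s_def S_plus_def core_def)
  have "e \<le> 6 / (1 - \<rho>) * u + (1 - \<rho>) * s - \<rho> * u - e"
  proof (cases "u > (1 - \<rho>) / 2")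
    case True
    then have "3 \<le> 6 / (1 - \<rho>) * u"
      using \<rho> by (simp add: field_simps)
    moreover have "-1/2 \<le> (1 - \<rho>) * s"
    proof -
      have "-1/2 \<le> (1 - \<rho>) * (-1/2)"
        using \<rho> by simp
      also have "\<dots> \<le> (1 - \<rho>) * s"
        using s \<rho> by (intro mult_left_mono) auto
      finally show ?thesis .
    qed
    moreover have "\<rho> * u \<le> 1" "e \<le> 1/4"
      using \<rho> u by (auto simp: e_def power2_eq_square mult_le_one)
    ultimately show ?thesis
      using \<rho> by linarith
  next
    case False
    then have "(1 - \<rho>) * (1/2) \<le> (1 - \<rho>) * s"
      using escape \<rho> by (intro mult_left_mono) auto
    moreover have "\<rho> * u \<le> \<rho> * ((1 - \<rho>) / 2)"
      using False \<rho> by (intro mult_left_mono) auto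
    moreover have "0 \<le> 6 / (1 - \<rho>) * u"
      using \<rho> u by simp
    moreover have "(1 - \<rho>) * (1/2) - \<rho> * ((1 - \<rho>) / 2) = 2 * e"
      by (simp add: e_def power2_eq_square field_simps)
    ultimately show ?thesis
      by linarith
  qed
  then show ?thesis
    using potential_S_plus_step[OF x(1)] by (simp add: s_def e_def)
qed

lemma potential_decrease_S_minus_open:
  assumes x: "(u, v) \<in> S_minus_open \<gamma>"
  shows "potential \<gamma> \<rho> (M_map \<gamma> \<rho> (u, v)) \<le> potential \<gamma> \<rho> (u, v) - min ((1 - \<rho>)^2 / 4) (- u)"
proof -
  define y where "y = M_map \<gamma> \<rho> (u, v)"
  have "u < 0"
    using x by (simp add: S_minus_open_def)
  moreover have "frac (fst y) = frac u"
    "lifted_level \<gamma> y = lifted_level \<gamma> (u, v) + (if fst y < 0 then u else 0)"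
    using S_minus_open_step[OF x] by (simp_all add: y_def)
  ultimately show ?thesis
    unfolding y_def[symmetric] by (auto simp: potential_def min_def)
qed

lemma potential_decrease:
  assumes x: "x \<in> trap \<gamma>" "x \<notin> core \<gamma> \<rho>" and b: "frac (fst x) \<le> b"
  shows "potential \<gamma> \<rho> (M_map \<gamma> \<rho> x) \<le> potential \<gamma> \<rho> x - min ((1 - \<rho>)^2 / 4) (1 - b)"
proof -
  obtain u v where x_eq: "x = (u, v)"
    by fastforce
  show ?thesis
  proof (cases "0 \<le> u")
    case True
    then have "(u, v) \<in> S_plus \<gamma>"
      using x by (auto simp: x_eq trap_def S_minus_open_def)
    then have "potential \<gamma> \<rho> (M_map \<gamma> \<rho> x) \<le> potential \<gamma> \<rho> x - (1 - \<rho>)^2 / 4"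
      using potential_decrease_S_plus x by (simp add: x_eq)
    then show ?thesis
      using min.cobounded1[of "(1 - \<rho>)^2 / 4" "1 - b"] by linarith
  next
    case False
    then have "(u, v) \<in> S_minus_open \<gamma>"
      using x by (auto simp: x_eq trap_def S_plus_def)
    moreover have "1 - b \<le> - u"
      using b frac_fst_trap[of u v \<gamma>] x False by (simp add: x_eq)
    ultimately show ?thesis
      using potential_decrease_S_minus_open[of u v] by (simp add: x_eq)
  qed
qed

lemma trap_enters_core:
  assumes "x \<in> trap \<gamma>"
  shows "\<exists>k. (M_map \<gamma> \<rho> ^^ k) x \<in> core \<gamma> \<rho>"
proof (rule orbit_enters_by_potential)
  let ?b = "frac (fst x)"
  show "x \<in> {y \<in> trap \<gamma>. frac (fst y) \<le> ?b}"
    using assms by simp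
  show "M_map \<gamma> \<rho> y \<in> {y \<in> trap \<gamma>. frac (fst y) \<le> ?b}" if "y \<in> {y \<in> trap \<gamma>. frac (fst y) \<le> ?b}" for y
    using trap_step that by fastforce
  show "-1/2 \<le> potential \<gamma> \<rho> y" if "y \<in> {y \<in> trap \<gamma>. frac (fst y) \<le> ?b}" for y
    using potential_lower_bound that by simp
  show "0 < min ((1 - \<rho>)^2 / 4) (1 - ?b)"
    using \<rho> frac_lt_1 by simp
  show "potential \<gamma> \<rho> (M_map \<gamma> \<rho> y) \<le> potential \<gamma> \<rho> y - min ((1 - \<rho>)^2 / 4) (1 - ?b)"
    if "y \<in> {y \<in> trap \<gamma>. frac (fst y) \<le> ?b}" "y \<notin> core \<gamma> \<rho>" for y
    using potential_decrease that by simp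
qed

lemma core_subset_S_plus: "core \<gamma> \<rho> \<subseteq> S_plus \<gamma>"
  using \<gamma> \<rho> by (auto simp: core_def S_plus_def)

lemma core_step:
  assumes x: "(u, v) \<in> core \<gamma> \<rho>"
  shows "M_map \<gamma> \<rho> (u, v) \<in> core \<gamma> \<rho> \<and>
    gauge \<gamma> \<rho> (M_map \<gamma> \<rho> (u, v)) \<le> (1 + \<rho>) / 2 * gauge \<gamma> \<rho> (u, v)"
proof -
  define s where "s = \<gamma> * u + v"
  from x have u: "0 \<le> u" "u \<le> (1 - \<rho>) / 2" and s: "\<bar>s\<bar> \<le> 1/2"
    unfolding core_def s_def abs_le_iff by auto
  have level: "\<gamma> * (\<rho> * u) + \<rho> * v = \<rho> * s"
    unfolding s_def by (rule level_scale)
  have \<rho>s: "\<bar>\<rho> * s\<bar> \<le> \<rho> / 2"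
    using s \<rho> mult_left_mono[of "\<bar>s\<bar>" "1/2" \<rho>] by (simp add: abs_mult)
  then have "\<bar>\<gamma> * (\<rho> * u) + \<rho> * v\<bar> < 1/2"
    using level \<rho> by simp
  then have image: "M_map \<gamma> \<rho> (u, v) = (\<rho> * u, \<rho> * u + \<rho> * v)"
    using u by (simp add: M_map_nonneg T_map_mid)
  have level': "\<gamma> * (\<rho> * u) + (\<rho> * u + \<rho> * v) = \<rho> * s + \<rho> * u"
    using level by simp
  have \<rho>u: "0 \<le> \<rho> * u" "\<rho> * u \<le> u" "\<rho> * u \<le> \<rho> * ((1 - \<rho>) / 2)"
    using \<rho> u mult_left_mono[OF u(2) \<rho>(1)] by (simp_all add: mult_left_le_one_le)
  have contract: "\<bar>\<rho> * s + \<rho> * u\<bar> + K * (\<rho> * u) \<le> (1 + \<rho>) / 2 * (\<bar>s\<bar> + K * u)"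
    if K: "K * (1 - \<rho>) = 2" for K
  proof -
    have "(1 + \<rho>) / 2 * (\<bar>s\<bar> + K * u) - (\<rho> * \<bar>s\<bar> + \<rho> * u + K * (\<rho> * u))
        = (1 - \<rho>) / 2 * \<bar>s\<bar> + (K * (1 - \<rho>) / 2 - \<rho>) * u"
      by (simp add: field_simps)
    also have "\<dots> = (1 - \<rho>) / 2 * \<bar>s\<bar> + (1 - \<rho>) * u"
      using K by simp
    also have "\<dots> \<ge> 0"
      using \<rho> u by simp
    finally show ?thesis
      using \<rho> \<rho>u abs_triangle_ineq[of "\<rho> * s" "\<rho> * u"] by (simp add: abs_mult)
  qed
  have "\<rho> * ((1 - \<rho>) / 2) + \<rho> / 2 = 1/2 - (1 - \<rho>)^2 / 2"
    by (simp add: power2_eq_square field_simps)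
  then have "(\<rho> * u, \<rho> * u + \<rho> * v) \<in> core \<gamma> \<rho>"
    unfolding core_def mem_Collect_eq case_prod_conv level'
    using u \<rho>u \<rho>s \<rho> zero_le_power2[of "1 - \<rho>"] unfolding abs_le_iff by argo
  moreover have "\<bar>\<rho> * s + \<rho> * u\<bar> + 2 / (1 - \<rho>) * (\<rho> * u) \<le> (1 + \<rho>) / 2 * (\<bar>s\<bar> + 2 / (1 - \<rho>) * u)"
    by (rule contract) (use \<rho> in \<open>simp add: field_simps\<close>)
  ultimately show ?thesis
    by (simp add: image gauge_def level' s_def)
qed

lemma norm_le_gauge:
  assumes "(u, v) \<in> core \<gamma> \<rho>"
  shows "norm (u, v) \<le> (1 + \<gamma>) * gauge \<gamma> \<rho> (u, v)"
proof -
  define s where "s = \<gamma> * u + v"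
  have u: "0 \<le> u"
    using assms by (simp add: core_def)
  have "\<bar>v\<bar> \<le> \<bar>s\<bar> + \<gamma> * u"
    using abs_triangle_ineq4[of s "\<gamma> * u"] u \<gamma> by (simp add: s_def abs_mult)
  then have "norm (u, v) \<le> (1 + \<gamma>) * u + \<bar>s\<bar>"
    using norm_Pair_le[of u v] u by (simp add: algebra_simps)
  also have "\<dots> \<le> (1 + \<gamma>) * (2 / (1 - \<rho>) * u) + (1 + \<gamma>) * \<bar>s\<bar>"
  proof (intro add_mono mult_left_mono)
    show "u \<le> 2 / (1 - \<rho>) * u"
      using u \<rho> mult_right_mono[of 1 "2 / (1 - \<rho>)" u] by simp
    show "\<bar>s\<bar> \<le> (1 + \<gamma>) * \<bar>s\<bar>"
      using \<gamma> by (simp add: mult_le_cancel_right1)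
  qed (use \<gamma> in simp)
  finally show ?thesis
    by (simp add: gauge_def s_def algebra_simps)
qed

text \<open>
  Three steps take a point \<open>(u, v)\<close> on the excluded edge, if it has not yet entered the trap,
  to \<open>(w, v')\<close> with \<open>w = u + 1\<close> and level \<open>3w + \<gamma> - 5/2\<close>. If this level and its
  \<open>\<rho>\<close>-multiple are both at most \<open>-1/2\<close>, two more steps lead to abscissa \<open>\<rho>\<^sup>2 w + \<rho> - 1\<close>
  and level \<open>\<rho>\<^sup>2(5w + \<gamma> - 5/2) + \<rho>(\<gamma> + 2) - (\<gamma> + 1)\<close>.
\<close>

context
  fixes w :: real
  assumes w: "0 \<le> w" and low: "3 * w + \<gamma> - 5/2 < -1/2" and scaled_low: "\<rho> * (3 * w + \<gamma> - 5/2) \<le> -1/2"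
begin

lemma boundary_rho_ge_third: "1 \<le> 3 * \<rho>"
proof -
  have "\<rho> * (-3/2) \<le> \<rho> * (3 * w + \<gamma> - 5/2)"
    using \<rho> \<gamma> w by (intro mult_left_mono) auto
  then show ?thesis
    using scaled_low by linarith
qed

lemma boundary_fourth_level_bound: "1/2 \<le> \<rho> * (\<rho> * (4 * w + \<gamma> - 5/2) + \<gamma> + 1)"
proof -
  have "\<rho> * (\<rho> * (4 * w + \<gamma> - 5/2) + \<gamma> + 1) - 1/2
      = 4 * (\<rho> * \<rho> * w) + (\<gamma> - 1) * (\<rho> * \<rho> + \<rho>) + (3 * \<rho> - 1) * (1 - \<rho>) / 2"
    by (simp add: field_simps)
  moreover have "0 \<le> (\<gamma> - 1) * (\<rho> * \<rho> + \<rho>)" "0 \<le> (3 * \<rho> - 1) * (1 - \<rho>)" "0 \<le> \<rho> * \<rho> * w"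
    using \<gamma> \<rho> w boundary_rho_ge_third by simp_all
  ultimately show ?thesis
    by linarith
qed

lemma boundary_fifth_level_lower: "-(1/2 + \<gamma>) \<le> \<rho> * \<rho> * (5 * w + \<gamma> - 5/2) + \<rho> * (\<gamma> + 2) - (\<gamma> + 1)"
proof -
  have "\<rho> * \<rho> * (5 * w + \<gamma> - 5/2) + \<rho> * (\<gamma> + 2) - (\<gamma> + 1) + (1/2 + \<gamma>)
      = 5 * (\<rho> * \<rho> * w) + (\<gamma> - 1) * (\<rho> * \<rho> + \<rho>) + (3 * \<rho> - 1) * (1 - \<rho>) / 2 + \<rho>"
    by (simp add: field_simps)
  moreover have "0 \<le> (\<gamma> - 1) * (\<rho> * \<rho> + \<rho>)" "0 \<le> (3 * \<rho> - 1) * (1 - \<rho>)" "0 \<le> \<rho> * \<rho> * w"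
    using \<gamma> \<rho> w boundary_rho_ge_third by simp_all
  ultimately show ?thesis
    using \<rho> by linarith
qed

lemma boundary_fifth_level_upper: "\<rho> * \<rho> * (5 * w + \<gamma> - 5/2) + \<rho> * (\<gamma> + 2) - (\<gamma> + 1) \<le> 1/2 + \<gamma>"
proof -
  have "\<rho> * \<rho> * (5 * w + \<gamma> - 5/2) \<le> \<rho> * \<rho> * (1/6)"
    using low \<gamma> w \<rho> by (intro mult_left_mono) auto
  moreover have "\<rho> * \<rho> * (1/6) \<le> 1/6" "\<rho> * (\<gamma> + 2) \<le> \<gamma> + 2"
    using \<rho> \<gamma> mult_right_mono[of \<rho> 1 "\<gamma> + 2"] by (simp_all add: mult_le_one)
  ultimately show ?thesis
    using \<gamma> by linarith
qed

lemma boundary_fifth_level_lower_nonneg: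
  assumes "0 \<le> \<rho> * \<rho> * w + \<rho> - 1"
  shows "-1/2 \<le> \<rho> * \<rho> * (5 * w + \<gamma> - 5/2) + \<rho> * (\<gamma> + 2) - (\<gamma> + 1)"
proof -
  have "\<rho> * \<rho> * w \<le> \<rho> * \<rho> * 1"
    using low \<gamma> \<rho> by (intro mult_left_mono) auto
  then have P: "0 \<le> \<rho> * \<rho> + \<rho> - 1"
    using assms by linarith
  have "\<rho> * \<rho> * (5 * w + \<gamma> - 5/2) + \<rho> * (\<gamma> + 2) - (\<gamma> + 1) + 1/2
      = (\<gamma> - 1) * (\<rho> * \<rho> + \<rho> - 1) + (\<rho> * \<rho> + \<rho> - 1) + 5 * (\<rho> * \<rho> * w) - 5/2 * (\<rho> * \<rho>) + 2 * \<rho> - 1/2"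
    by (simp add: field_simps)
  moreover have "0 \<le> (\<gamma> - 1) * (\<rho> * \<rho> + \<rho> - 1)" "0 \<le> (1 - \<rho>) * (7 + 3 * \<rho>)"
    using \<gamma> P \<rho> by simp_all
  moreover have "(1 - \<rho>) * (7 + 3 * \<rho>) = 7 - 4 * \<rho> - 3 * (\<rho> * \<rho>)"
    by (simp add: field_simps)
  ultimately show ?thesis
    using assms by linarith
qed

lemma boundary_rho_gamma_bound: "\<rho> * \<gamma> \<le> 5 * \<rho> / 2 - 3 * \<rho> * w - 1/2"
  using scaled_low by (simp add: field_simps)

lemma boundary_fifth_level_upper_small_rho:
  assumes small: "\<rho> < 3/4"
  shows "\<rho> * \<rho> * (5 * w + \<gamma> - 5/2) + \<rho> * (\<gamma> + 2) - (\<gamma> + 1) < 1/2"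
proof -
  define X where "X = 5 * \<rho> / 2 - 3 * \<rho> * w - 1/2"
  have \<rho>\<gamma>: "\<rho> * \<gamma> \<le> X"
    using boundary_rho_gamma_bound by (simp add: X_def)
  have "(\<rho> * \<gamma>) * (\<rho> + 1) \<le> X * (\<rho> + 1)"
    using \<rho>\<gamma> \<rho> by (intro mult_right_mono) auto
  moreover have "0 \<le> (\<rho> * w) * (3 - 2 * \<rho>)"
    using \<rho> w by simp
  moreover have "\<rho> * \<rho> * (5 * w + \<gamma> - 5/2) + \<rho> * (\<gamma> + 2) - (\<gamma> + 1) - 1/2
      = (\<rho> * \<gamma>) * (\<rho> + 1) - \<gamma> + 5 * (\<rho> * \<rho> * w) - 5/2 * (\<rho> * \<rho>) + 2 * \<rho> - 3/2"
    by (simp add: field_simps)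
  moreover have "X * (\<rho> + 1) = 5/2 * (\<rho> * \<rho>) + 2 * \<rho> - 3 * (\<rho> * \<rho> * w) - 3 * (\<rho> * w) - 1/2"
    by (simp add: X_def field_simps)
  moreover have "(\<rho> * w) * (3 - 2 * \<rho>) = 3 * (\<rho> * w) - 2 * (\<rho> * \<rho> * w)"
    by (simp add: field_simps)
  ultimately show ?thesis
    using small \<gamma> by linarith
qed

lemma boundary_fifth_level_upper_large_rho:
  assumes large: "3/4 \<le> \<rho>" and neg: "\<rho> * \<rho> * w + \<rho> - 1 < 0"
  shows "\<rho> * \<rho> * (5 * w + \<gamma> - 5/2) + \<rho> * (\<gamma> + 2) - (\<gamma> + 1) < 1/2"
proof -
  define X where "X = 5 * \<rho> / 2 - 3 * \<rho> * w - 1/2"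
  have \<rho>\<gamma>: "\<rho> * \<gamma> \<le> X"
    using boundary_rho_gamma_bound by (simp add: X_def)
  define P where "P = \<rho> * \<rho> + \<rho> - 1"
  have "3/4 * (3/4) \<le> \<rho> * \<rho>"
    using large by (intro mult_mono) auto
  then have P: "0 \<le> P"
    unfolding P_def using large by linarith
  have Q: "0 < 2 * \<rho> * \<rho> - 3 * \<rho> + 3"
  proof -
    have "2 * \<rho> * \<rho> - 3 * \<rho> + 3 = 2 * (\<rho> - 3/4)^2 + 15/8"
      by (simp add: algebra_simps power2_eq_square)
    moreover have "0 \<le> (\<rho> - 3/4)^2"
      by simp
    ultimately show ?thesis
      by linarith
  qed
  have F1: "\<rho> * ((\<rho> * \<gamma>) * P) \<le> \<rho> * (X * P)"
    using \<rho>\<gamma> P \<rho> by (intro mult_left_mono mult_right_mono) auto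
  have F2: "(\<rho> * \<rho> * w) * (2 * \<rho> * \<rho> - 3 * \<rho> + 3) < (1 - \<rho>) * (2 * \<rho> * \<rho> - 3 * \<rho> + 3)"
    using neg Q by (intro mult_strict_right_mono) auto
  have F3: "0 \<le> (1 - \<rho>) * ((\<rho> - 3/4) * (2 * \<rho> + 4))"
    using large \<rho> by simp
  have I1: "\<rho> * \<rho> * (\<rho> * \<rho> * (5 * w + \<gamma> - 5/2) + \<rho> * (\<gamma> + 2) - (\<gamma> + 1) - 1/2)
      = \<rho> * ((\<rho> * \<gamma>) * P) + \<rho> * \<rho> * (5 * (\<rho> * \<rho> * w) - 5/2 * (\<rho> * \<rho>) + 2 * \<rho> - 3/2)"
    by (simp add: P_def field_simps)
  have I2: "\<rho> * (X * P) + \<rho> * \<rho> * (5 * (\<rho> * \<rho> * w) - 5/2 * (\<rho> * \<rho>) + 2 * \<rho> - 3/2)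
      = \<rho> * (\<rho> - 1) * (8 * \<rho> - 1) / 2 + (\<rho> * \<rho> * w) * (2 * \<rho> * \<rho> - 3 * \<rho> + 3)"
    by (simp add: P_def X_def field_simps)
  have I3: "\<rho> * (\<rho> - 1) * (8 * \<rho> - 1) / 2 + (1 - \<rho>) * (2 * \<rho> * \<rho> - 3 * \<rho> + 3)
      = - ((1 - \<rho>) * ((\<rho> - 3/4) * (2 * \<rho> + 4)))"
    by (simp add: field_simps)
  have "\<rho> * \<rho> * (\<rho> * \<rho> * (5 * w + \<gamma> - 5/2) + \<rho> * (\<gamma> + 2) - (\<gamma> + 1) - 1/2) < 0"
    using I1 I2 I3 F1 F2 F3 by linarith
  moreover have "0 < \<rho> * \<rho>"
    using large by simp
  ultimately show ?thesis
    by (simp add: mult_less_0_iff)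
qed

lemma boundary_fifth_point_in_trap:
  assumes a: "a = \<rho> * \<rho> * w + \<rho> - 1"
    and level: "\<gamma> * a + b = \<rho> * \<rho> * (5 * w + \<gamma> - 5/2) + \<rho> * (\<gamma> + 2) - (\<gamma> + 1)"
  shows "(a, b) \<in> trap \<gamma>"
proof (cases "0 \<le> a")
  case True
  have "\<rho> * \<rho> * w \<le> 1"
    using \<rho> w low \<gamma> by (intro mult_le_one) (auto simp: mult_le_one)
  then have "(a, b) \<in> S_plus \<gamma>"
    unfolding S_plus_def mem_Collect_eq case_prod_conv level
    using True boundary_fifth_level_lower_nonneg boundary_fifth_level_upper \<rho> a by linarith
  then show ?thesis
    by (simp add: trap_def)
next
  case False
  have "0 \<le> \<rho> * \<rho> * w"
    using \<rho> w by simp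
  then have "(a, b) \<in> S_minus_open \<gamma>"
    unfolding S_minus_open_def mem_Collect_eq case_prod_conv level
    using False boundary_fifth_level_lower boundary_fifth_level_upper_small_rho
      boundary_fifth_level_upper_large_rho \<rho> a by (cases "\<rho> < 3/4") auto
  then show ?thesis
    by (simp add: trap_def)
qed

lemma boundary_second_iterate_in_trap:
  assumes level: "\<gamma> * w + v = 3 * w + \<gamma> - 5/2"
  shows "(M_map \<gamma> \<rho> ^^ 2) (w, v) \<in> trap \<gamma>"
proof -
  define a b where "a = \<rho> * w + 1" and "b = \<rho> * w + \<rho> * v + 1"
  have scaled: "\<gamma> * (\<rho> * w) + \<rho> * v = \<rho> * (3 * w + \<gamma> - 5/2)"
    using level_scale[of \<gamma> \<rho> w v] level by simp
  then have first: "M_map \<gamma> \<rho> (w, v) = (a, b)"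
    using w scaled_low by (simp add: M_map_nonneg T_map_low a_def b_def)
  have level_ab: "\<gamma> * a + b = \<rho> * (4 * w + \<gamma> - 5/2) + \<gamma> + 1"
    using scaled by (simp add: a_def b_def algebra_simps)
  then have "1/2 \<le> \<rho> * (\<gamma> * a + b)"
    using boundary_fourth_level_bound by simp
  then have second: "M_map \<gamma> \<rho> (a, b) = (\<rho> * a - 1, \<rho> * a + \<rho> * b - 1)"
    using \<rho> w level_scale[of \<gamma> \<rho> a b] by (simp add: a_def M_map_nonneg T_map_high)
  have "(\<rho> * a - 1, \<rho> * a + \<rho> * b - 1) \<in> trap \<gamma>"
  proof (rule boundary_fifth_point_in_trap)
    show "\<rho> * a - 1 = \<rho> * \<rho> * w + \<rho> - 1"
      by (simp add: a_def algebra_simps)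
    have "\<gamma> * (\<rho> * a - 1) + (\<rho> * a + \<rho> * b - 1) = \<rho> * (\<gamma> * a + b) + \<rho> * a - \<gamma> - 1"
      by (simp add: algebra_simps)
    then show "\<gamma> * (\<rho> * a - 1) + (\<rho> * a + \<rho> * b - 1)
        = \<rho> * \<rho> * (5 * w + \<gamma> - 5/2) + \<rho> * (\<gamma> + 2) - (\<gamma> + 1)"
      unfolding level_ab by (simp add: a_def algebra_simps)
  qed
  then show ?thesis
    by (simp add: numeral_2_eq_2 first second)
qed

end

lemma boundary_tail_enters_trap:
  assumes w: "0 \<le> w" "w < 1" and level: "\<gamma> * w + v = 3 * w + \<gamma> - 5/2"
  shows "\<exists>m. (M_map \<gamma> \<rho> ^^ m) (w, v) \<in> trap \<gamma>"
proof -
  define \<sigma> where "\<sigma> = 3 * w + \<gamma> - 5/2"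
  have scaled: "\<gamma> * (\<rho> * w) + \<rho> * v = \<rho> * \<sigma>"
    using level_scale[of \<gamma> \<rho> w v] level by (simp add: \<sigma>_def)
  consider (unscaled) "-1/2 \<le> \<sigma>" | (scaled_mid) "\<sigma> < -1/2" "-1/2 < \<rho> * \<sigma>"
    | (scaled_low) "\<sigma> < -1/2" "\<rho> * \<sigma> \<le> -1/2"
    by linarith
  then show ?thesis
  proof cases
    case unscaled
    then have "(w, v) \<in> trap \<gamma>"
      using w level by (simp add: trap_def S_plus_def \<sigma>_def)
    then show ?thesis
      by (metis funpow_0)
  next
    case scaled_mid
    have "\<rho> * \<sigma> \<le> 0"
      using scaled_mid \<rho> by (simp add: mult_nonneg_nonpos)
    then have image: "M_map \<gamma> \<rho> (w, v) = (\<rho> * w, \<rho> * w + \<rho> * v)"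
      using w scaled_mid scaled by (simp add: M_map_nonneg T_map_mid)
    have "\<rho> * w < 1"
      using \<rho> w mult_right_mono[of \<rho> 1 w] by simp
    moreover have level': "\<gamma> * (\<rho> * w) + (\<rho> * w + \<rho> * v) = \<rho> * \<sigma> + \<rho> * w"
      using scaled by simp
    moreover have "0 \<le> \<rho> * w"
      using \<rho> w by simp
    ultimately have "(\<rho> * w, \<rho> * w + \<rho> * v) \<in> S_plus \<gamma>"
      unfolding S_plus_def mem_Collect_eq case_prod_conv level'
      using scaled_mid \<open>\<rho> * \<sigma> \<le> 0\<close> \<gamma> by linarith
    then have "(M_map \<gamma> \<rho> ^^ 1) (w, v) \<in> trap \<gamma>"
      by (simp add: image trap_def)
    then show ?thesis
      by blast
  next
    case scaled_low
    then have "(M_map \<gamma> \<rho> ^^ 2) (w, v) \<in> trap \<gamma>"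
      using boundary_second_iterate_in_trap[OF w(1)] level by (simp add: \<sigma>_def)
    then show ?thesis
      by blast
  qed
qed

lemma boundary_enters_trap:
  assumes level: "\<gamma> * u + v = 1/2" and u: "-1 \<le> u" "u < 0"
  shows "\<exists>m. (M_map \<gamma> \<rho> ^^ m) (u, v) \<in> trap \<gamma>"
proof -
  have first: "M_map \<gamma> \<rho> (u, v) = (u - 1, u + v - 1)"
    using u level by (simp add: M_map_neg T_map_high)
  have "\<gamma> * (u - 1) + (u + v - 1) \<le> -1/2"
    using level u \<gamma> by (simp add: algebra_simps)
  then have second: "M_map \<gamma> \<rho> (u - 1, u + v - 1) = (u, 2 * u + v - 1)"
    using u by (simp add: M_map_neg T_map_low)
  have level2: "\<gamma> * u + (2 * u + v - 1) = 2 * u - 1/2"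
    using level by simp
  have two: "(M_map \<gamma> \<rho> ^^ 2) (u, v) = (u, 2 * u + v - 1)"
    by (simp add: numeral_2_eq_2 first second)
  show ?thesis
  proof (cases "-(1/2 + \<gamma>) \<le> 2 * u - 1/2")
    case True
    then have "(u, 2 * u + v - 1) \<in> trap \<gamma>"
      unfolding trap_def S_minus_open_def using u level2 by simp
    then show ?thesis
      using two by metis
  next
    case False
    then have "M_map \<gamma> \<rho> (u, 2 * u + v - 1) = (u + 1, 3 * u + v)"
      using u \<gamma> level2 by (simp add: M_map_neg T_map_low)
    then have three: "(M_map \<gamma> \<rho> ^^ 3) (u, v) = (u + 1, 3 * u + v)"
      using two by (simp add: numeral_3_eq_3 numeral_2_eq_2)
    have "\<gamma> * (u + 1) + (3 * u + v) = 3 * (u + 1) + \<gamma> - 5/2"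
      using level by (simp add: algebra_simps)
    then have "\<exists>m. (M_map \<gamma> \<rho> ^^ m) (u + 1, 3 * u + v) \<in> trap \<gamma>"
      by (rule boundary_tail_enters_trap[rotated 2]) (use u in simp_all)
    then obtain m where "(M_map \<gamma> \<rho> ^^ m) (u + 1, 3 * u + v) \<in> trap \<gamma>" ..
    then have "(M_map \<gamma> \<rho> ^^ (m + 3)) (u, v) \<in> trap \<gamma>"
      by (simp add: funpow_add three)
    then show ?thesis
      by blast
  qed
qed

lemma S_set_enters_trap:
  assumes "x \<in> S_set \<gamma>"
  shows "\<exists>m. (M_map \<gamma> \<rho> ^^ m) x \<in> trap \<gamma>"
proof (cases "x \<in> trap \<gamma>")
  case True
  then show ?thesis
    by (metis funpow_0)
next
  case False
  obtain u v where "x = (u, v)"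
    by fastforce
  with assms False show ?thesis
    using S_set_minus_trap boundary_enters_trap by auto
qed

lemma S_set_enters_core:
  assumes "x \<in> S_set \<gamma>"
  shows "\<exists>N. (M_map \<gamma> \<rho> ^^ N) x \<in> core \<gamma> \<rho>"
proof -
  obtain m where "(M_map \<gamma> \<rho> ^^ m) x \<in> trap \<gamma>"
    using S_set_enters_trap[OF assms] by blast
  then obtain k where "(M_map \<gamma> \<rho> ^^ k) ((M_map \<gamma> \<rho> ^^ m) x) \<in> core \<gamma> \<rho>"
    using trap_enters_core by blast
  then show ?thesis
    by (metis comp_apply funpow_add)
qed

lemma core_invariant: "x \<in> core \<gamma> \<rho> \<Longrightarrow> M_map \<gamma> \<rho> x \<in> core \<gamma> \<rho>"
  using core_step by (cases x) blast

lemma core_orbit_tendsto_zero: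
  assumes "x \<in> core \<gamma> \<rho>"
  shows "(\<lambda>n. norm ((M_map \<gamma> \<rho> ^^ n) x)) \<longlonglongrightarrow> 0"
proof (rule orbit_tendsto_zero_by_gauge[OF assms core_invariant])
  show "gauge \<gamma> \<rho> (M_map \<gamma> \<rho> y) \<le> (1 + \<rho>) / 2 * gauge \<gamma> \<rho> y" if "y \<in> core \<gamma> \<rho>" for y
    using core_step that by (cases y) blast
  show "norm y \<le> (1 + \<gamma>) * gauge \<gamma> \<rho> y" if "y \<in> core \<gamma> \<rho>" for y
    using norm_le_gauge that by (cases y) blast
qed (use \<gamma> \<rho> in auto)

end

theorem proposition4:
  fixes \<gamma> \<rho> :: real and x0 :: "real \<times> real"
  assumes "\<gamma> \<ge> 1" and "0 \<le> \<rho>" and "\<rho> < 1"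
    and "x0 \<in> S_set \<gamma>"
  shows "(\<exists>N. \<forall>n\<ge>N. (M_map \<gamma> \<rho> ^^ n) x0 \<in> S_plus \<gamma>)
       \<and> ((\<lambda>n. norm ((M_map \<gamma> \<rho> ^^ n) x0)) \<longlonglongrightarrow> 0)"
proof -
  note params = assms(1-3)
  let ?M = "M_map \<gamma> \<rho>"
  obtain N where core: "(?M ^^ N) x0 \<in> core \<gamma> \<rho>"
    using S_set_enters_core[OF params assms(4)] by blast
  have "(?M ^^ n) x0 \<in> S_plus \<gamma>" if "N \<le> n" for n
  proof -
    have "(?M ^^ (n - N)) ((?M ^^ N) x0) \<in> core \<gamma> \<rho>"
      using core core_invariant[OF params] by (rule funpow_invariant)
    moreover have "(?M ^^ (n - N)) ((?M ^^ N) x0) = (?M ^^ n) x0"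
      using that by (metis le_add_diff_inverse2 funpow_add comp_apply)
    ultimately show ?thesis
      using core_subset_S_plus[OF params] by auto
  qed
  moreover have "(\<lambda>n. norm ((?M ^^ (n + N)) x0)) \<longlonglongrightarrow> 0"
    using core_orbit_tendsto_zero[OF params core] by (simp add: funpow_add)
  then have "(\<lambda>n. norm ((?M ^^ n) x0)) \<longlonglongrightarrow> 0"
    by (rule LIMSEQ_offset)
  ultimately show ?thesis
    by blast
qed

end
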